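(* Let $k$ be a field of characteristic zero, ${\boldsymbol\lambda}\in M_n(k)$ antisymmetric, $A=k_{\boldsymbol\lambda}[x_1,\dots,x_n]$, and let $P$ be a Poisson prime ideal of $A$. Then there exist a field extension $K\supseteq k$ and an antisymmetric matrix ${\boldsymbol\mu}\in M_m(k)$, for some $m\le n$, such that $\operatorname{Fract}A/P\cong K_{\boldsymbol\mu}(y_1,\dots,y_m)$ as Poisson algebras. Moreover, ${\boldsymbol\mu}$ is the upper left $m\times m$ submatrix of ${\boldsymbol\sigma}{\boldsymbol\lambda}{\boldsymbol\sigma}^{\mathrm{tr}}$ for some ${\boldsymbol\sigma}\in GL_n(\mathbb Z)$.
   Context: For an antisymmetric matrix ${\boldsymbol\lambda}=(\lambda_{ij})\in M_n(k)$, $k_{\boldsymbol\lambda}[x_1,\dots,x_n]$ denotes the polynomial algebra with the unique Poisson bracket satisfying $\{x_i,x_j\}=\lambda_{ij}x_ix_j$ for all $i,j$. For a field $K\supseteq k$ and antisymmetric ${\boldsymbol\mu}\in M_m(k)$, $K_{\boldsymbol\mu}(y_1,\dots,y_m)$ denotes the rational function field over $K$ with the unique $K$-linear Poisson bracket satisfying $\{y_i,y_j\}=\mu_{ij}y_iy_j$. A Poisson prime ideal is a prime ideal $P$ with $\{A,P\}\subseteq P$; the bracket on $A/P$ extends uniquely to $\operatorname{Fract}A/P$. *)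

theory Defs
  imports "HOL-Library.Poly_Mapping"
begin

text \<open>Multivariate polynomials with coefficients in 'a, in the variables x_0, x_1, ...:
  a monomial is an exponent vector (finitely supported nat => nat), a polynomial a finitely supported
  coefficient function on monomials (convolution product = polynomial product).\<close>
type_synonym 'a mpoly = "(nat \<Rightarrow>\<^sub>0 nat) \<Rightarrow>\<^sub>0 'a"

definition mconst :: "'a::zero \<Rightarrow> 'a mpoly" where
  "mconst c = Poly_Mapping.single 0 c"

definition mvar :: "nat \<Rightarrow> 'a::{zero,one} mpoly" where
  "mvar i = Poly_Mapping.single (Poly_Mapping.single i 1) 1"

text \<open>Polynomials in the variables x_0,...,x_{n-1} (i.e. k[x_1,...,x_n]).\<close>
definition polys_in :: "nat \<Rightarrow> 'a::zero mpoly set" where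
  "polys_in n = {p. \<forall>mo\<in>Poly_Mapping.keys p. Poly_Mapping.keys mo \<subseteq> {..<n}}"

definition polys_over :: "'a::zero set \<Rightarrow> nat \<Rightarrow> 'a mpoly set" where
  "polys_over S m = {p \<in> polys_in m. \<forall>mo. Poly_Mapping.lookup p mo \<in> S}"

definition mpderiv :: "nat \<Rightarrow> 'a::comm_ring_1 mpoly \<Rightarrow> 'a mpoly" where
  "mpderiv i p = (\<Sum>mo\<in>Poly_Mapping.keys p.
      Poly_Mapping.single (mo - Poly_Mapping.single i 1) (of_nat (Poly_Mapping.lookup mo i) * Poly_Mapping.lookup p mo))"

text \<open>The Poisson bracket of k_lambda[x_1,...,x_n]:
  {f,g} = sum_{i,j} lambda_ij x_i x_j (d f/d x_i) (d g/d x_j), the unique Poisson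
  bracket with {x_i,x_j} = lambda_ij x_i x_j.\<close>
definition qbracket :: "nat \<Rightarrow> (nat \<Rightarrow> nat \<Rightarrow> 'a::comm_ring_1) \<Rightarrow> 'a mpoly \<Rightarrow> 'a mpoly \<Rightarrow> 'a mpoly" where
  "qbracket n lam f g = (\<Sum>i<n. \<Sum>j<n.
      mconst (lam i j) * mvar i * mvar j * mpderiv i f * mpderiv j g)"

definition antisym_mat :: "nat \<Rightarrow> (nat \<Rightarrow> nat \<Rightarrow> 'a::ab_group_add) \<Rightarrow> bool" where
  "antisym_mat n M \<longleftrightarrow> (\<forall>i<n. \<forall>j<n. M i j = - M j i)"

definition prime_ideal_in :: "'a::comm_ring_1 set \<Rightarrow> 'a set \<Rightarrow> bool" where
  "prime_ideal_in A P \<longleftrightarrow> P \<subseteq> A \<and> 0 \<in> P \<and> (\<forall>a\<in>P. \<forall>b\<in>P. a + b \<in> P \<and> - a \<in> P)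
     \<and> (\<forall>a\<in>A. \<forall>b\<in>P. a * b \<in> P) \<and> 1 \<notin> P
     \<and> (\<forall>a\<in>A. \<forall>b\<in>A. a * b \<in> P \<longrightarrow> a \<in> P \<or> b \<in> P)"

definition poisson_prime :: "nat \<Rightarrow> (nat \<Rightarrow> nat \<Rightarrow> 'a::comm_ring_1) \<Rightarrow> 'a mpoly set \<Rightarrow> bool" where
  "poisson_prime n lam P \<longleftrightarrow> prime_ideal_in (polys_in n) P
     \<and> (\<forall>a\<in>polys_in n. \<forall>b\<in>P. qbracket n lam a b \<in> P)"

definition poisson_bracket :: "('f::field \<Rightarrow> 'f \<Rightarrow> 'f) \<Rightarrow> bool" where
  "poisson_bracket br \<longleftrightarrow>
     (\<forall>a b. br a b = - br b a)
   \<and> (\<forall>a b c. br (a + b) c = br a c + br b c)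
   \<and> (\<forall>a b c. br (a * b) c = a * br b c + b * br a c)
   \<and> (\<forall>a b c. br a (br b c) + br b (br c a) + br c (br a b) = 0)"

text \<open>(F, phi, br) is a model of the Poisson field Fract(A/P), A = k_lambda[x_1..x_n]:
  phi : A -> F is a ring homomorphism with kernel P, F is the field of fractions of
  its image, and br is a Poisson bracket on F extending (via phi) that of A.\<close>
definition is_poisson_fract_quot ::
  "nat \<Rightarrow> (nat \<Rightarrow> nat \<Rightarrow> 'k::field) \<Rightarrow> 'k mpoly set \<Rightarrow> ('k mpoly \<Rightarrow> 'f::field)
     \<Rightarrow> ('f \<Rightarrow> 'f \<Rightarrow> 'f) \<Rightarrow> bool" where
  "is_poisson_fract_quot n lam P phi br \<longleftrightarrow>
     (\<forall>a\<in>polys_in n. \<forall>b\<in>polys_in n. phi (a + b) = phi a + phi b \<and> phi (a * b) = phi a * phi b)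
   \<and> phi 1 = 1
   \<and> (\<forall>a\<in>polys_in n. phi a = 0 \<longleftrightarrow> a \<in> P)
   \<and> (\<forall>z. \<exists>a\<in>polys_in n. \<exists>b\<in>polys_in n. b \<notin> P \<and> z = phi a / phi b)
   \<and> poisson_bracket br
   \<and> (\<forall>a\<in>polys_in n. \<forall>b\<in>polys_in n. br (phi a) (phi b) = phi (qbracket n lam a b))"

definition subfield :: "'f::field set \<Rightarrow> bool" where
  "subfield K \<longleftrightarrow> 0 \<in> K \<and> 1 \<in> K \<and> (\<forall>a\<in>K. \<forall>b\<in>K. a + b \<in> K \<and> a * b \<in> K)
     \<and> (\<forall>a\<in>K. - a \<in> K \<and> inverse a \<in> K)"

definition meval :: "(nat \<Rightarrow> 'a::comm_ring_1) \<Rightarrow> 'a mpoly \<Rightarrow> 'a" where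
  "meval y p = (\<Sum>mo\<in>Poly_Mapping.keys p. Poly_Mapping.lookup p mo * (\<Prod>i\<in>Poly_Mapping.keys mo. y i ^ Poly_Mapping.lookup mo i))"

definition GL_int :: "nat \<Rightarrow> (nat \<Rightarrow> nat \<Rightarrow> int) \<Rightarrow> bool" where
  "GL_int n s \<longleftrightarrow> (\<exists>t. \<forall>i<n. \<forall>j<n.
      (\<Sum>l<n. s i l * t l j) = (if i = j then 1 else 0)
    \<and> (\<Sum>l<n. t i l * s l j) = (if i = j then 1 else 0))"

definition conj_mat :: "nat \<Rightarrow> (nat \<Rightarrow> nat \<Rightarrow> int) \<Rightarrow> (nat \<Rightarrow> nat \<Rightarrow> 'a::comm_ring_1) \<Rightarrow> nat \<Rightarrow> nat \<Rightarrow> 'a" where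
  "conj_mat n s lam i j = (\<Sum>a<n. \<Sum>b<n. of_int (s i a) * lam a b * of_int (s j b))"

text \<open>(F, br) is isomorphic as a Poisson algebra to K_mu(y_1,...,y_m), realized inside F:
  K is a subfield of F containing (the image of) k on which the bracket vanishes
  (the bracket is K-linear), y_1..y_m are algebraically independent over K and generate F
  as a field over K, and {y_i, y_j} = mu_ij y_i y_j.\<close>
definition is_quantum_rat_field ::
  "('k::field \<Rightarrow> 'f::field) \<Rightarrow> ('f \<Rightarrow> 'f \<Rightarrow> 'f) \<Rightarrow> nat \<Rightarrow> (nat \<Rightarrow> nat \<Rightarrow> 'k) \<Rightarrow> bool" where
  "is_quantum_rat_field emb br m mu \<longleftrightarrow>
    (\<exists>K y. subfield K \<and> range emb \<subseteq> K
       \<and> (\<forall>a\<in>K. \<forall>z. br a z = 0)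
       \<and> (\<forall>p\<in>polys_over K m. meval y p = 0 \<longrightarrow> p = 0)
       \<and> (\<forall>z. \<exists>p\<in>polys_over K m. \<exists>q\<in>polys_over K m. meval y q \<noteq> 0 \<and> z = meval y p / meval y q)
       \<and> (\<forall>i<m. \<forall>j<m. br (y i) (y j) = emb (mu i j) * y i * y j))"

end

theory Submission
  imports Defs
begin

text \<open>Let u_i be the image of x_i in the Poisson field F = Fract(A/P) and T the set of i with u_i \<noteq> 0. For v \<in> Z^T the
  bracket of the Laurent monomial u^v with u_j is (v lam)_j u^v u_j, so u^v is Poisson central when
  v lam vanishes on T. A Euclidean reduction of integer relations yields a basis s of Z^n in which
  the rows outside a set A give central monomials, while the m = |A| rows in A are supported on T and
  have Z-linearly independent weights v lam. With K the Poisson center of F and y_k = u^(s_k) for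
  the rows in A (moved to the front), {y_k, y_l} = (s lam s^tr)_kl y_k y_l. The y_k generate F over K,
  since s is invertible over Z, and they are algebraically independent over K: distinct monomials in
  them are eigenvectors of the derivations {-, u_j} with distinct eigenvalues, by characteristic
  zero.\<close>

section \<open>Poisson fields\<close>

locale poisson_field =
  fixes br :: "'f::field \<Rightarrow> 'f \<Rightarrow> 'f"
  assumes poisson_bracket: "poisson_bracket br"
begin

lemma bracket_antisym: "br a b = - br b a"
  using poisson_bracket unfolding poisson_bracket_def by blast

lemma bracket_add_left: "br (a + b) c = br a c + br b c"
  using poisson_bracket unfolding poisson_bracket_def by blast

lemma bracket_mult_left: "br (a * b) c = a * br b c + b * br a c"
  using poisson_bracket unfolding poisson_bracket_def by blast

lemma bracket_zero_left [simp]: "br 0 c = 0"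
  using bracket_add_left[of 0 0 c] by (metis add.right_neutral add_left_cancel)

lemma bracket_zero_right [simp]: "br c 0 = 0"
  using bracket_antisym[of c 0] by simp

lemma bracket_one_left [simp]: "br 1 c = 0"
  using bracket_mult_left[of 1 1 c] by (metis add.right_neutral add_left_cancel mult_1)

lemma bracket_one_right [simp]: "br c 1 = 0"
  using bracket_antisym[of c 1] by simp

lemma bracket_uminus_left: "br (- a) c = - br a c"
  using bracket_add_left[of a "- a" c]
  by (metis add.commute add.right_inverse add_eq_0_iff bracket_zero_left)

lemma bracket_add_right: "br c (a + b) = br c a + br c b"
  using bracket_antisym[of c "a + b"] bracket_antisym[of c a] bracket_antisym[of c b]
    bracket_add_left[of a b c] by simp

lemma bracket_mult_right: "br c (a * b) = a * br c b + b * br c a"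
  using bracket_antisym[of c "a * b"] bracket_antisym[of c a] bracket_antisym[of c b]
    bracket_mult_left[of a b c] by (simp add: algebra_simps)

lemma bracket_sum_left: "br (sum f S) c = (\<Sum>i\<in>S. br (f i) c)"
  by (induction S rule: infinite_finite_induct) (auto simp: bracket_add_left)

lemma bracket_inverse_left: "br (inverse a) c = - br a c / a\<^sup>2"
proof (cases "a = 0")
  case False
  have "a * br (inverse a) c + inverse a * br a c = 0"
    using False bracket_mult_left[of a "inverse a" c] by simp
  then have "a * br (inverse a) c = - (inverse a * br a c)"
    by (simp add: eq_neg_iff_add_eq_0)
  then have "inverse a * (a * br (inverse a) c) = inverse a * (- (inverse a * br a c))"
    by simp
  then have "br (inverse a) c = - (inverse a * inverse a * br a c)"
    using False by (simp add: mult.assoc[symmetric])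
  then show ?thesis
    using False by (simp add: power2_eq_square divide_inverse mult.commute)
qed simp

definition log_bracket :: "'f \<Rightarrow> 'f \<Rightarrow> 'f" where
  "log_bracket a z = br a z / a"

lemma bracket_eq_log_bracket: "br a z = a * log_bracket a z"
  by (cases "a = 0") (auto simp: log_bracket_def)

lemma log_bracket_one [simp]: "log_bracket 1 z = 0"
  by (simp add: log_bracket_def)

lemma log_bracket_mult: "a \<noteq> 0 \<Longrightarrow> b \<noteq> 0 \<Longrightarrow> log_bracket (a * b) z = log_bracket a z + log_bracket b z"
  by (simp add: log_bracket_def bracket_mult_left field_simps)

lemma log_bracket_inverse: "a \<noteq> 0 \<Longrightarrow> log_bracket (inverse a) z = - log_bracket a z"
  unfolding log_bracket_def bracket_inverse_left by (simp add: power2_eq_square divide_inverse)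

lemma log_bracket_power: "a \<noteq> 0 \<Longrightarrow> log_bracket (a ^ k) z = of_nat k * log_bracket a z"
  by (induction k) (simp_all add: log_bracket_mult algebra_simps)

lemma log_bracket_power_int: "a \<noteq> 0 \<Longrightarrow> log_bracket (a powi k) z = of_int k * log_bracket a z"
  by (cases "k \<ge> 0") (auto simp: power_int_def log_bracket_power log_bracket_inverse)

lemma log_bracket_prod:
  "(\<And>i. i \<in> S \<Longrightarrow> f i \<noteq> 0) \<Longrightarrow> log_bracket (prod f S) z = (\<Sum>i\<in>S. log_bracket (f i) z)"
  by (induction S rule: infinite_finite_induct) (simp_all add: log_bracket_mult)

lemma subfield_centralizer: "subfield {z. br x z = 0}"
  unfolding subfield_def
proof (intro conjI ballI)
  fix a assume "a \<in> {z. br x z = 0}"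
  then show "- a \<in> {z. br x z = 0}" "inverse a \<in> {z. br x z = 0}"
    using bracket_antisym[of x "- a"] bracket_antisym[of x "inverse a"] bracket_antisym[of x a]
    by (simp_all add: bracket_uminus_left bracket_inverse_left)
qed (auto simp: bracket_add_right bracket_mult_right)

definition center :: "'f set" where
  "center = {a. \<forall>z. br a z = 0}"

lemma subfield_center: "subfield center"
  unfolding subfield_def center_def
  by (auto simp: bracket_add_left bracket_mult_left bracket_uminus_left bracket_inverse_left)

end

lemma subfield_add: "subfield K \<Longrightarrow> a \<in> K \<Longrightarrow> b \<in> K \<Longrightarrow> a + b \<in> K"
  and subfield_mult: "subfield K \<Longrightarrow> a \<in> K \<Longrightarrow> b \<in> K \<Longrightarrow> a * b \<in> K"
  and subfield_uminus: "subfield K \<Longrightarrow> a \<in> K \<Longrightarrow> - a \<in> K"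
  and subfield_inverse: "subfield K \<Longrightarrow> a \<in> K \<Longrightarrow> inverse a \<in> K"
  and subfield_zero: "subfield K \<Longrightarrow> 0 \<in> K"
  and subfield_one: "subfield K \<Longrightarrow> 1 \<in> K"
  by (simp_all add: subfield_def)

lemma subfield_diff: "subfield K \<Longrightarrow> a \<in> K \<Longrightarrow> b \<in> K \<Longrightarrow> a - b \<in> K"
  using subfield_add[of K a "- b"] subfield_uminus[of K b] by simp

lemma subfield_divide: "subfield K \<Longrightarrow> a \<in> K \<Longrightarrow> b \<in> K \<Longrightarrow> a / b \<in> K"
  by (simp add: divide_inverse subfield_mult subfield_inverse)

lemma subfield_sum: "subfield K \<Longrightarrow> (\<And>i. i \<in> S \<Longrightarrow> f i \<in> K) \<Longrightarrow> sum f S \<in> K"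
  by (induction S rule: infinite_finite_induct) (auto simp: subfield_zero subfield_add)

lemma subfield_prod: "subfield K \<Longrightarrow> (\<And>i. i \<in> S \<Longrightarrow> f i \<in> K) \<Longrightarrow> prod f S \<in> K"
  by (induction S rule: infinite_finite_induct) (auto simp: subfield_one subfield_mult)

lemma subfield_power: "subfield K \<Longrightarrow> a \<in> K \<Longrightarrow> a ^ k \<in> K"
  by (induction k) (auto simp: subfield_one subfield_mult)

lemma subfield_power_int: "subfield K \<Longrightarrow> a \<in> K \<Longrightarrow> a powi k \<in> K"
  by (auto simp: power_int_def subfield_power subfield_inverse)

lemma prod_power_int_distrib: "(prod f S) powi k = (\<Prod>i\<in>S. f i powi k)" for f :: "'a \<Rightarrow> 'b::field"
  by (induction S rule: infinite_finite_induct) (simp_all add: power_int_mult_distrib)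

lemma prod_power_int_eq_power_int_sum:
  "(a::'b::field) \<noteq> 0 \<Longrightarrow> (\<Prod>r\<in>S. a powi e r) = a powi (sum e S)"
  by (induction S rule: infinite_finite_induct) (simp_all add: power_int_add)

context poisson_field
begin

lemma bracket_center_mult_left: "a \<in> center \<Longrightarrow> br (a * b) z = a * br b z"
  by (simp add: center_def bracket_mult_left)

text \<open>Eigenvectors of the derivations {-, t_j} with separated eigenvalues are linearly independent
  over the center: apply {-, t_j} to a shortest relation and subtract a multiple of it.\<close>

lemma sum_center_eigenvectors_nonzero:
  assumes "finite M" "M \<noteq> {}"
    and "\<forall>x\<in>M. c x \<in> center \<and> c x \<noteq> 0"
    and "\<forall>x\<in>M. f x \<noteq> 0 \<and> (\<forall>j\<in>J. br (f x) (t j) = w j x * f x * t j \<and> w j x \<in> center)"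
    and "\<forall>j\<in>J. t j \<noteq> 0"
    and "\<forall>x\<in>M. \<forall>x'\<in>M. x \<noteq> x' \<longrightarrow> (\<exists>j\<in>J. w j x \<noteq> w j x')"
  shows "(\<Sum>x\<in>M. c x * f x) \<noteq> 0"
  using assms
proof (induction "card M" arbitrary: M c rule: less_induct)
  case less
  obtain x0 where x0: "x0 \<in> M"
    using less.prems(2) by blast
  show ?case
  proof (cases "M = {x0}")
    case True
    then show ?thesis using less.prems(3,4) by simp
  next
    case False
    then obtain x1 where "x1 \<in> M" "x1 \<noteq> x0"
      using x0 by blast
    then obtain j where j: "j \<in> J" "w j x1 \<noteq> w j x0"
      using less.prems(6) x0 by blast
    define M' where "M' = {x \<in> M. w j x \<noteq> w j x0}"
    define e where "e x = (w j x - w j x0) * c x" for x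
    have "br (c x * f x) (t j) = w j x * (c x * f x) * t j" if "x \<in> M" for x
      using less.prems(3,4) j(1) that by (simp add: bracket_center_mult_left mult_ac)
    then have "br (\<Sum>x\<in>M. c x * f x) (t j) = (\<Sum>x\<in>M. w j x * (c x * f x)) * t j"
      by (simp add: bracket_sum_left sum_distrib_right)
    moreover have "(\<Sum>x\<in>M'. e x * f x)
        = (\<Sum>x\<in>M. w j x * (c x * f x)) - w j x0 * (\<Sum>x\<in>M. c x * f x)"
      using less.prems(1)
      by (subst sum.mono_neutral_left[of M])
        (auto simp: M'_def e_def sum_subtractf sum_distrib_left algebra_simps)
    moreover have "(\<Sum>x\<in>M'. e x * f x) \<noteq> 0"
    proof (rule less.hyps)
      show "card M' < card M" "finite M'"
        using less.prems(1) x0 by (auto simp: M'_def intro!: psubset_card_mono)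
      show "M' \<noteq> {}"
        using \<open>x1 \<in> M\<close> j by (auto simp: M'_def)
      show "\<forall>x\<in>M'. e x \<in> center \<and> e x \<noteq> 0"
        using less.prems(3,4) x0 j(1)
        by (auto simp: M'_def e_def
            intro!: subfield_mult[OF subfield_center] subfield_diff[OF subfield_center])
    qed (use less.prems in \<open>auto simp: M'_def\<close>)
    ultimately show ?thesis
      using less.prems(5) j(1) by auto
  qed
qed

end

section \<open>Polynomials and their values\<close>

lemma poly_mapping_eq_sum_single:
  "(p :: 'a \<Rightarrow>\<^sub>0 'b::comm_monoid_add)
    = (\<Sum>mo\<in>Poly_Mapping.keys p. Poly_Mapping.single mo (Poly_Mapping.lookup p mo))"
proof (rule poly_mapping_eqI)
  fix k
  have "Poly_Mapping.lookup (\<Sum>mo\<in>Poly_Mapping.keys p. Poly_Mapping.single mo (Poly_Mapping.lookup p mo)) k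
      = (\<Sum>mo\<in>Poly_Mapping.keys p. (Poly_Mapping.lookup p mo when mo = k))"
    by (simp add: lookup_sum lookup_single)
  also have "\<dots> = Poly_Mapping.lookup p k"
    by (cases "k \<in> Poly_Mapping.keys p") (simp_all add: when_def sum.delta in_keys_iff)
  finally show "Poly_Mapping.lookup p k
      = Poly_Mapping.lookup (\<Sum>mo\<in>Poly_Mapping.keys p. Poly_Mapping.single mo (Poly_Mapping.lookup p mo)) k"
    by simp
qed

lemma polys_in_zero [simp]: "0 \<in> polys_in n"
  by (simp add: polys_in_def)

lemma polys_in_one [simp]: "(1 :: 'a::comm_semiring_1 mpoly) \<in> polys_in n"
  by (simp add: polys_in_def)

lemma polys_in_add: "p \<in> polys_in n \<Longrightarrow> q \<in> polys_in n \<Longrightarrow> p + q \<in> polys_in n"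
  unfolding polys_in_def using keys_add[of p q] by blast

lemma polys_in_mult:
  assumes "p \<in> polys_in n" "q \<in> polys_in n"
  shows "(p :: 'a::comm_semiring_1 mpoly) * q \<in> polys_in n"
  unfolding polys_in_def
proof (intro CollectI ballI)
  fix mo assume "mo \<in> Poly_Mapping.keys (p * q)"
  then obtain a b where "a \<in> Poly_Mapping.keys p" "b \<in> Poly_Mapping.keys q" "mo = a + b"
    using keys_mult by blast
  with assms show "Poly_Mapping.keys mo \<subseteq> {..<n}"
    using keys_add[of a b] unfolding polys_in_def by blast
qed

lemma polys_in_single: "Poly_Mapping.keys mo \<subseteq> {..<n} \<Longrightarrow> Poly_Mapping.single mo c \<in> polys_in n"
  unfolding polys_in_def by auto

lemma polys_in_mconst [simp]: "mconst c \<in> polys_in n"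
  unfolding mconst_def by (rule polys_in_single) simp

lemma polys_in_mvar: "i < n \<Longrightarrow> mvar i \<in> polys_in n"
  unfolding mvar_def by (rule polys_in_single) simp

lemma polys_in_sum: "(\<And>i. i \<in> S \<Longrightarrow> f i \<in> polys_in n) \<Longrightarrow> sum f S \<in> polys_in n"
  by (induction S rule: infinite_finite_induct) (auto intro: polys_in_add)

lemma polys_in_prod:
  "(\<And>i. i \<in> S \<Longrightarrow> f i \<in> polys_in n) \<Longrightarrow> (prod f S :: 'a::comm_semiring_1 mpoly) \<in> polys_in n"
  by (induction S rule: infinite_finite_induct) (auto intro: polys_in_mult)

lemma polys_in_power: "p \<in> polys_in n \<Longrightarrow> (p :: 'a::comm_semiring_1 mpoly) ^ k \<in> polys_in n"
  by (induction k) (auto intro: polys_in_mult)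

lemma mconst_add: "mconst (a + b) = mconst a + mconst b"
  by (simp add: mconst_def single_add)

lemma mconst_mult: "mconst (a * b) = mconst a * (mconst b :: 'a::comm_semiring_1 mpoly)"
  by (simp add: mconst_def mult_single)

lemma mconst_one [simp]: "mconst 1 = (1 :: 'a::comm_semiring_1 mpoly)"
  by (simp add: mconst_def)

lemma mvar_power:
  "(mvar i :: 'a::comm_semiring_1 mpoly) ^ e = Poly_Mapping.single (Poly_Mapping.single i e) 1"
proof (induction e)
  case (Suc e)
  have "(mvar i :: 'a mpoly) ^ Suc e
      = Poly_Mapping.single (Poly_Mapping.single i 1 + Poly_Mapping.single i e) 1"
    using Suc by (simp add: mvar_def mult_single)
  also have "Poly_Mapping.single i 1 + Poly_Mapping.single i e = Poly_Mapping.single i (Suc e)"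
    by (simp add: single_add[symmetric])
  finally show ?case .
qed simp

lemma single_eq_mconst_times_mvars:
  "Poly_Mapping.single mo c
    = mconst c * (\<Prod>i\<in>Poly_Mapping.keys mo. mvar i ^ Poly_Mapping.lookup mo i :: 'a::comm_semiring_1 mpoly)"
proof -
  have "finite S \<Longrightarrow> (\<Prod>i\<in>S. mvar i ^ e i :: 'a mpoly)
      = Poly_Mapping.single (\<Sum>i\<in>S. Poly_Mapping.single i (e i)) 1" for S e
    by (induction S rule: finite_induct) (simp_all add: mvar_power mult_single)
  then have "(\<Prod>i\<in>Poly_Mapping.keys mo. mvar i ^ Poly_Mapping.lookup mo i :: 'a mpoly)
      = Poly_Mapping.single mo 1"
    by (simp flip: poly_mapping_eq_sum_single)
  then show ?thesis
    by (simp add: mconst_def mult_single)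
qed

lemma mpderiv_mvar: "mpderiv a (mvar i :: 'a::comm_ring_1 mpoly) = (if a = i then 1 else 0)"
  unfolding mpderiv_def mvar_def by (auto simp: lookup_single when_def)

lemma mpderiv_mconst: "mpderiv a (mconst c :: 'a::comm_ring_1 mpoly) = 0"
  unfolding mpderiv_def mconst_def by (auto simp: lookup_single when_def)

lemma qbracket_mconst: "qbracket n lam (mconst c) g = 0"
  unfolding qbracket_def by (simp add: mpderiv_mconst)

lemma qbracket_mvar:
  assumes "i < n" "j < n"
  shows "qbracket n lam (mvar i) (mvar j) = mconst (lam i j) * mvar i * mvar j"
proof -
  have "mconst (lam a b) * mvar a * mvar b * (if a = i then 1 else 0) * (if b = j then 1 else 0)
      = (if b = j then (if a = i then mconst (lam a b) * mvar a * mvar b else 0) else 0)" for a b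
    by simp
  then show ?thesis
    using assms unfolding qbracket_def mpderiv_mvar by (simp add: sum.delta)
qed

definition monom_val :: "(nat \<Rightarrow> 'a::comm_ring_1) \<Rightarrow> (nat \<Rightarrow>\<^sub>0 nat) \<Rightarrow> 'a" where
  "monom_val y mo = (\<Prod>i\<in>Poly_Mapping.keys mo. y i ^ Poly_Mapping.lookup mo i)"

lemma meval_eq_sum_monom_val:
  "meval y p = (\<Sum>mo\<in>Poly_Mapping.keys p. Poly_Mapping.lookup p mo * monom_val y mo)"
  unfolding meval_def monom_val_def ..

lemma monom_val_superset:
  "finite S \<Longrightarrow> Poly_Mapping.keys mo \<subseteq> S \<Longrightarrow> monom_val y mo = (\<Prod>i\<in>S. y i ^ Poly_Mapping.lookup mo i)"
  unfolding monom_val_def by (rule prod.mono_neutral_left) (auto simp: in_keys_iff)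

lemma monom_val_add: "monom_val y (a + b) = monom_val y a * monom_val y b"
proof -
  let ?S = "Poly_Mapping.keys a \<union> Poly_Mapping.keys b"
  have "monom_val y (a + b) = (\<Prod>i\<in>?S. y i ^ Poly_Mapping.lookup (a + b) i)"
    by (rule monom_val_superset) (auto dest: keys_add[THEN subsetD])
  also have "\<dots> = (\<Prod>i\<in>?S. y i ^ Poly_Mapping.lookup a i) * (\<Prod>i\<in>?S. y i ^ Poly_Mapping.lookup b i)"
    by (simp add: lookup_add power_add prod.distrib)
  also have "\<dots> = monom_val y a * monom_val y b"
    by (simp add: monom_val_superset[symmetric])
  finally show ?thesis .
qed

lemma meval_superset:
  "finite S \<Longrightarrow> Poly_Mapping.keys p \<subseteq> S
    \<Longrightarrow> meval y p = (\<Sum>mo\<in>S. Poly_Mapping.lookup p mo * monom_val y mo)"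
  unfolding meval_eq_sum_monom_val by (rule sum.mono_neutral_left) (auto simp: in_keys_iff)

lemma meval_add: "meval y (p + q) = meval y p + meval y q"
proof -
  let ?S = "Poly_Mapping.keys p \<union> Poly_Mapping.keys q"
  have "meval y (p + q) = (\<Sum>mo\<in>?S. Poly_Mapping.lookup (p + q) mo * monom_val y mo)"
    by (rule meval_superset) (auto dest: keys_add[THEN subsetD])
  also have "\<dots> = (\<Sum>mo\<in>?S. Poly_Mapping.lookup p mo * monom_val y mo)
      + (\<Sum>mo\<in>?S. Poly_Mapping.lookup q mo * monom_val y mo)"
    by (simp add: lookup_add distrib_right sum.distrib)
  also have "\<dots> = meval y p + meval y q"
    by (simp add: meval_superset[symmetric])
  finally show ?thesis .
qed

lemma meval_zero [simp]: "meval y 0 = 0"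
  by (simp add: meval_def)

lemma meval_sum: "meval y (sum f S) = (\<Sum>i\<in>S. meval y (f i))"
  by (induction S rule: infinite_finite_induct) (simp_all add: meval_add)

lemma meval_single: "meval y (Poly_Mapping.single mo c) = c * monom_val y mo"
  by (cases "c = 0") (simp_all add: meval_eq_sum_monom_val)

lemma meval_mult: "meval y (p * q) = meval y p * meval y q"
proof -
  have "p * q = (\<Sum>a\<in>Poly_Mapping.keys p. \<Sum>b\<in>Poly_Mapping.keys q.
      Poly_Mapping.single a (Poly_Mapping.lookup p a) * Poly_Mapping.single b (Poly_Mapping.lookup q b))"
    by (subst poly_mapping_eq_sum_single[of p], subst poly_mapping_eq_sum_single[of q])
      (simp add: sum_distrib_left sum_distrib_right, rule sum.swap)
  then have "meval y (p * q) = (\<Sum>a\<in>Poly_Mapping.keys p. \<Sum>b\<in>Poly_Mapping.keys q.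
      (Poly_Mapping.lookup p a * monom_val y a) * (Poly_Mapping.lookup q b * monom_val y b))"
    by (simp add: meval_sum mult_single meval_single monom_val_add algebra_simps)
  also have "\<dots> = meval y p * meval y q"
    by (simp add: meval_eq_sum_monom_val sum_distrib_left sum_distrib_right, rule sum.swap)
  finally show ?thesis .
qed

lemma meval_mconst [simp]: "meval y (mconst c) = c"
  by (simp add: mconst_def meval_single monom_val_def)

lemma meval_one [simp]: "meval y 1 = 1"
  using meval_mconst[of y 1] by simp

lemma meval_mvar [simp]: "meval y (mvar i) = y i"
  by (simp add: mvar_def meval_single monom_val_def)

lemma polys_over_add:
  "subfield K \<Longrightarrow> p \<in> polys_over K m \<Longrightarrow> q \<in> polys_over K m \<Longrightarrow> p + q \<in> polys_over K m"
  unfolding polys_over_def by (auto intro: polys_in_add subfield_add simp: lookup_add)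

lemma polys_over_mult:
  assumes K: "subfield K" and p: "p \<in> polys_over K m" and q: "q \<in> polys_over K m"
  shows "p * q \<in> polys_over K m"
proof -
  have "p * q = (\<Sum>a\<in>Poly_Mapping.keys p. \<Sum>b\<in>Poly_Mapping.keys q.
      Poly_Mapping.single (a + b) (Poly_Mapping.lookup p a * Poly_Mapping.lookup q b))"
    by (subst poly_mapping_eq_sum_single[of p], subst poly_mapping_eq_sum_single[of q])
      (simp add: sum_distrib_left sum_distrib_right mult_single, rule sum.swap)
  then have "Poly_Mapping.lookup (p * q) mo = (\<Sum>a\<in>Poly_Mapping.keys p. \<Sum>b\<in>Poly_Mapping.keys q.
      (Poly_Mapping.lookup p a * Poly_Mapping.lookup q b when a + b = mo))" for mo
    by (simp add: lookup_sum lookup_single)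
  moreover have "(\<Sum>a\<in>Poly_Mapping.keys p. \<Sum>b\<in>Poly_Mapping.keys q.
      (Poly_Mapping.lookup p a * Poly_Mapping.lookup q b when a + b = mo)) \<in> K" for mo
    using p q K by (intro subfield_sum) (auto simp: when_def polys_over_def subfield_def)
  ultimately show ?thesis
    using p q polys_in_mult unfolding polys_over_def by auto
qed

lemma polys_over_single:
  "Poly_Mapping.keys mo \<subseteq> {..<m} \<Longrightarrow> subfield K \<Longrightarrow> c \<in> K \<Longrightarrow> Poly_Mapping.single mo c \<in> polys_over K m"
  unfolding polys_over_def by (auto intro: polys_in_single simp: lookup_single when_def subfield_def)

lemma polys_over_mconst: "subfield K \<Longrightarrow> c \<in> K \<Longrightarrow> mconst c \<in> polys_over K m"
  unfolding mconst_def by (rule polys_over_single) auto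

lemma polys_over_one: "subfield K \<Longrightarrow> 1 \<in> polys_over K m"
  using polys_over_mconst[of K 1] by (simp add: subfield_one)

lemma polys_over_mvar: "i < m \<Longrightarrow> subfield K \<Longrightarrow> mvar i \<in> polys_over K m"
  unfolding mvar_def by (rule polys_over_single) (auto simp: subfield_def)

definition rational_values :: "'f::field set \<Rightarrow> nat \<Rightarrow> (nat \<Rightarrow> 'f) \<Rightarrow> 'f set" where
  "rational_values K m y = {z. \<exists>a\<in>polys_over K m. \<exists>b\<in>polys_over K m.
      meval y b \<noteq> 0 \<and> z = meval y a / meval y b}"

lemma rational_valuesI:
  "a \<in> polys_over K m \<Longrightarrow> b \<in> polys_over K m \<Longrightarrow> meval y b \<noteq> 0 \<Longrightarrow> z = meval y a / meval y b
    \<Longrightarrow> z \<in> rational_values K m y"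
  unfolding rational_values_def by blast

lemma rational_values_const: "subfield K \<Longrightarrow> c \<in> K \<Longrightarrow> c \<in> rational_values K m y"
  by (rule rational_valuesI[of "mconst c" _ _ 1]) (simp_all add: polys_over_mconst polys_over_one)

lemma rational_values_var: "subfield K \<Longrightarrow> k < m \<Longrightarrow> y k \<in> rational_values K m y"
  by (rule rational_valuesI[of "mvar k" _ _ 1]) (simp_all add: polys_over_mvar polys_over_one)

lemma subfield_rational_values:
  assumes K: "subfield K"
  shows "subfield (rational_values K m y)"
  unfolding subfield_def
proof (intro conjI ballI)
  show "0 \<in> rational_values K m y" "1 \<in> rational_values K m y"
    using K by (simp_all add: rational_values_const subfield_zero subfield_one)
next
  fix z1 z2 assume "z1 \<in> rational_values K m y" "z2 \<in> rational_values K m y"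
  then obtain a1 b1 a2 b2 where
    ab: "a1 \<in> polys_over K m" "b1 \<in> polys_over K m" "a2 \<in> polys_over K m" "b2 \<in> polys_over K m"
    and nz: "meval y b1 \<noteq> 0" "meval y b2 \<noteq> 0"
    and z: "z1 = meval y a1 / meval y b1" "z2 = meval y a2 / meval y b2"
    unfolding rational_values_def by blast
  show "z1 + z2 \<in> rational_values K m y"
    by (rule rational_valuesI[of "a1 * b2 + a2 * b1" _ _ "b1 * b2"])
      (use ab nz K in \<open>auto simp: z meval_add meval_mult field_simps
        intro!: polys_over_add polys_over_mult\<close>)
  show "z1 * z2 \<in> rational_values K m y"
    by (rule rational_valuesI[of "a1 * a2" _ _ "b1 * b2"])
      (use ab nz K in \<open>auto simp: z meval_mult intro!: polys_over_mult\<close>)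
next
  fix z assume "z \<in> rational_values K m y"
  then obtain a b where ab: "a \<in> polys_over K m" "b \<in> polys_over K m"
    and nz: "meval y b \<noteq> 0" and z: "z = meval y a / meval y b"
    unfolding rational_values_def by blast
  show "- z \<in> rational_values K m y"
    by (rule rational_valuesI[of "mconst (- 1) * a" _ _ b])
      (use ab nz K in \<open>auto simp: z meval_mult
        intro!: polys_over_mult polys_over_mconst subfield_uminus subfield_one\<close>)
  show "inverse z \<in> rational_values K m y"
  proof (cases "meval y a = 0")
    case True
    then show ?thesis using K by (simp add: z rational_values_const subfield_zero)
  next
    case False
    then show ?thesis by (intro rational_valuesI[of b _ _ a]) (simp_all add: ab nz z)
  qed
qed

section \<open>Integer matrices\<close>

lemma GL_int_id: "GL_int n (\<lambda>i j. if i = j then 1 else 0)"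
  unfolding GL_int_def
  by (rule exI[of _ "\<lambda>i j. if i = j then 1 else 0"])
    (simp add: if_distrib[of "\<lambda>x. x * _"] sum.delta cong: if_cong)

lemma GL_int_add_row:
  assumes G: "GL_int n s" and r: "r1 < n" "r2 < n" "r1 \<noteq> r2"
  shows "GL_int n (\<lambda>i l. s i l + (if i = r2 then q else 0) * s r1 l)"
proof -
  obtain t where
    t: "\<And>i j. i < n \<Longrightarrow> j < n \<Longrightarrow> (\<Sum>l<n. s i l * t l j) = (if i = j then 1 else 0)"
       "\<And>i j. i < n \<Longrightarrow> j < n \<Longrightarrow> (\<Sum>l<n. t i l * s l j) = (if i = j then 1 else 0)"
    using G unfolding GL_int_def by blast
  define e where "e i = (if i = r2 then q else 0)" for i
  define f where "f j = (if j = r1 then q else 0)" for j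
  have delta: "(\<Sum>l<n. g l * e l) = g r2 * q" "(\<Sum>l<n. f l * g l) = q * g r1" for g
    using r unfolding e_def f_def
    by (simp_all add: if_distrib[of "\<lambda>x. g _ * x"] if_distrib[of "\<lambda>x. x * g _"] sum.delta cong: if_cong)
  show ?thesis unfolding GL_int_def e_def[symmetric]
  proof (rule exI[of _ "\<lambda>l j. t l j - t l r2 * f j"], intro allI impI conjI)
    fix i j assume ij: "i < n" "j < n"
    have "(\<Sum>l<n. (s i l + e i * s r1 l) * (t l j - t l r2 * f j))
        = (\<Sum>l<n. s i l * t l j) - f j * (\<Sum>l<n. s i l * t l r2) + e i * (\<Sum>l<n. s r1 l * t l j)
          - e i * f j * (\<Sum>l<n. s r1 l * t l r2)"
      by (simp add: algebra_simps sum.distrib sum_subtractf sum_distrib_left)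
    also have "\<dots> = (if i = j then 1 else 0)"
      using ij r by (simp add: t e_def f_def)
    finally show "(\<Sum>l<n. (s i l + e i * s r1 l) * (t l j - t l r2 * f j)) = (if i = j then 1 else 0)" .
    have "(\<Sum>l<n. (t i l - t i r2 * f l) * (s l j + e l * s r1 j))
        = (\<Sum>l<n. t i l * s l j) + s r1 j * (\<Sum>l<n. t i l * e l) - t i r2 * (\<Sum>l<n. f l * s l j)
          - t i r2 * s r1 j * (\<Sum>l<n. f l * e l)"
      by (simp add: algebra_simps sum.distrib sum_subtractf sum_distrib_left)
    also have "\<dots> = (if i = j then 1 else 0)"
      unfolding delta using ij r by (simp add: t e_def f_def)
    finally show "(\<Sum>l<n. (t i l - t i r2 * f l) * (s l j + e l * s r1 j)) = (if i = j then 1 else 0)" .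
  qed
qed

lemma GL_int_permute_rows:
  assumes G: "GL_int n s" and p: "bij_betw p {..<n} {..<n}"
  shows "GL_int n (\<lambda>i. s (p i))"
proof -
  obtain t where
    t: "\<And>i j. i < n \<Longrightarrow> j < n \<Longrightarrow> (\<Sum>l<n. s i l * t l j) = (if i = j then 1 else 0)"
       "\<And>i j. i < n \<Longrightarrow> j < n \<Longrightarrow> (\<Sum>l<n. t i l * s l j) = (if i = j then 1 else 0)"
    using G unfolding GL_int_def by blast
  have p_lt: "i < n \<Longrightarrow> p i < n" for i
    using p unfolding bij_betw_def by auto
  have p_eq_iff: "i < n \<Longrightarrow> j < n \<Longrightarrow> p i = p j \<longleftrightarrow> i = j" for i j
    using p unfolding bij_betw_def inj_on_def by auto
  show ?thesis unfolding GL_int_def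
  proof (rule exI[of _ "\<lambda>i j. t i (p j)"], intro allI impI conjI)
    fix i j assume ij: "i < n" "j < n"
    show "(\<Sum>l<n. s (p i) l * t l (p j)) = (if i = j then 1 else 0)"
      using ij by (simp add: t p_lt p_eq_iff)
    have "(\<Sum>l<n. t i (p l) * s (p l) j) = (\<Sum>l<n. t i l * s l j)"
      using sum.reindex_bij_betw[OF p, of "\<lambda>l. t i l * s l j"] by simp
    then show "(\<Sum>l<n. t i (p l) * s (p l) j) = (if i = j then 1 else 0)"
      using ij t by simp
  qed
qed

lemma exists_permutation_onto_prefix:
  assumes "A \<subseteq> {..<n}"
  shows "\<exists>p. bij_betw p {..<n} {..<n} \<and> p ` {..<card A} = A"
proof -
  have fin: "finite A"
    using assms finite_subset by blast
  define xs where "xs = sorted_list_of_set A @ sorted_list_of_set ({..<n} - A)"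
  have "distinct xs" "set xs = {..<n}"
    using assms fin by (auto simp: xs_def)
  moreover have "card A \<le> n"
    using card_mono[OF _ assms] by simp
  then have "length xs = n" "take (card A) xs = sorted_list_of_set A"
    using assms fin by (simp_all add: xs_def card_Diff_subset)
  ultimately have "bij_betw ((!) xs) {..<n} {..<n}" "(!) xs ` {0..<card A} = A"
    using fin \<open>card A \<le> n\<close> by (simp_all add: bij_betw_nth nth_image)
  then show ?thesis
    by (auto simp: atLeast0LessThan)
qed

lemma antisym_mat_conj_mat:
  assumes "antisym_mat n lam"
  shows "antisym_mat m (conj_mat n s lam)"
  unfolding antisym_mat_def conj_mat_def
proof (intro allI impI)
  fix i j
  have "of_int (s i a) * lam a b * of_int (s j b) = - (of_int (s j b) * lam b a * of_int (s i a))"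
    if "a < n" "b < n" for a b
  proof -
    have "lam a b = - lam b a"
      using assms that unfolding antisym_mat_def by blast
    then show ?thesis
      by (simp only:) (simp add: algebra_simps)
  qed
  then have "(\<Sum>a<n. \<Sum>b<n. of_int (s i a) * lam a b * of_int (s j b))
      = (\<Sum>b<n. \<Sum>a<n. - (of_int (s j b) * lam b a * of_int (s i a)))"
    by (subst sum.swap) (intro sum.cong refl, simp)
  then show "(\<Sum>a<n. \<Sum>b<n. of_int (s i a) * lam a b * of_int (s j b))
      = - (\<Sum>a<n. \<Sum>b<n. of_int (s j a) * lam a b * of_int (s i b))"
    by (simp add: sum_negf)
qed

section \<open>Lattice bases adapted to a skew-symmetric form\<close>

text \<open>If W(v) is the Laurent monomial with exponent vector v in the nonzero generators u_i, i \<in> T,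
  then {W(v), u_j} = weight T lam v j * W(v) * u_j.\<close>

definition weight :: "nat set \<Rightarrow> (nat \<Rightarrow> nat \<Rightarrow> 'k::comm_ring_1) \<Rightarrow> (nat \<Rightarrow> int) \<Rightarrow> nat \<Rightarrow> 'k" where
  "weight T lam v j = (\<Sum>i\<in>T. of_int (v i) * lam i j)"

text \<open>Rows outside A give central monomials, rows in A give the coordinates y_1, ..., y_m.\<close>

definition adapted_basis ::
  "nat \<Rightarrow> nat set \<Rightarrow> (nat \<Rightarrow> nat \<Rightarrow> 'k::comm_ring_1) \<Rightarrow> (nat \<Rightarrow> nat \<Rightarrow> int) \<Rightarrow> nat set \<Rightarrow> bool" where
  "adapted_basis n T lam s A \<longleftrightarrow> GL_int n s \<and> A \<subseteq> {..<n}
     \<and> (\<forall>r\<in>A. \<forall>i<n. s r i \<noteq> 0 \<longrightarrow> i \<in> T)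
     \<and> (\<forall>r<n. r \<notin> A \<longrightarrow> (\<forall>j\<in>T. weight T lam (s r) j = 0))"

definition independent_weights ::
  "nat set \<Rightarrow> (nat \<Rightarrow> nat \<Rightarrow> 'k::comm_ring_1) \<Rightarrow> (nat \<Rightarrow> nat \<Rightarrow> int) \<Rightarrow> nat set \<Rightarrow> bool" where
  "independent_weights T lam s A \<longleftrightarrow>
     (\<forall>c. (\<forall>j\<in>T. (\<Sum>r\<in>A. of_int (c r) * weight T lam (s r) j) = 0) \<longrightarrow> (\<forall>r\<in>A. c r = 0))"

lemma adapted_basis_subset: "adapted_basis n T lam s A \<Longrightarrow> A \<subseteq> {..<n}"
  by (simp add: adapted_basis_def)

lemma weight_add_row:
  "weight T lam (\<lambda>l. v l + e * w l) j = weight T lam v j + of_int e * weight T lam w j"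
  unfolding weight_def by (simp add: algebra_simps sum.distrib sum_distrib_left)

lemma adapted_basis_identity:
  "T \<subseteq> {..<n} \<Longrightarrow> adapted_basis n T lam (\<lambda>i j. if i = j then 1 else 0) T"
  unfolding adapted_basis_def weight_def by (auto simp: GL_int_id intro: sum.neutral)

lemma adapted_basis_remove_row:
  assumes "adapted_basis n T lam s A" and "\<forall>j\<in>T. weight T lam (s r) j = 0"
  shows "adapted_basis n T lam s (A - {r})"
  using assms unfolding adapted_basis_def by blast

lemma adapted_basis_add_row:
  assumes "adapted_basis n T lam s A" "a \<in> A" "b \<in> A" "a \<noteq> b"
  shows "adapted_basis n T lam (\<lambda>i l. s i l + (if i = b then q else 0) * s a l) A"
  using assms GL_int_add_row[of n s a b q] unfolding adapted_basis_def
  by (auto simp: subset_iff) (metis mult_zero_right add_0)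

lemma sum_coeffs_row_operation:
  fixes E :: "nat \<Rightarrow> 'k::comm_ring_1"
  assumes "finite A" "a \<in> A" "b \<in> A" "a \<noteq> b"
  shows "(\<Sum>r\<in>A. of_int ((c(a := c a - q * c b)) r) * (E r + of_int (if r = b then q else 0) * E a))
       = (\<Sum>r\<in>A. of_int (c r) * E r)"
proof -
  have "(\<Sum>r\<in>A. of_int ((c(a := c a - q * c b)) r) * (E r + of_int (if r = b then q else 0) * E a))
      = (\<Sum>r\<in>A. of_int (c r) * E r + (if r = a then - (of_int q * of_int (c b) * E a) else 0)
          + (if r = b then of_int (c b) * of_int q * E a else 0))"
    using assms(4) by (intro sum.cong) (auto simp: algebra_simps)
  also have "\<dots> = (\<Sum>r\<in>A. of_int (c r) * E r)"
    using assms by (simp add: sum.distrib sum.delta)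
  finally show ?thesis .
qed

lemma abs_sub_sgn_mult_less:
  fixes a b :: int
  assumes "a \<noteq> 0" "b \<noteq> 0" "\<bar>b\<bar> \<le> \<bar>a\<bar>"
  shows "\<bar>a - sgn a * sgn b * b\<bar> < \<bar>a\<bar>"
  using assms by (cases "a > 0"; cases "b > 0") (auto simp: sgn_if)

lemma sum_nat_abs_update_less:
  fixes c :: "'a \<Rightarrow> int"
  assumes "finite A" "a \<in> A" "\<bar>x\<bar> < \<bar>c a\<bar>"
  shows "(\<Sum>r\<in>A. nat \<bar>(c(a := x)) r\<bar>) < (\<Sum>r\<in>A. nat \<bar>c r\<bar>)"
proof -
  have "(\<Sum>r\<in>A - {a}. nat \<bar>(c(a := x)) r\<bar>) = (\<Sum>r\<in>A - {a}. nat \<bar>c r\<bar>)"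
    by (intro sum.cong) auto
  then show ?thesis
    using assms by (simp add: sum.remove[of _ a])
qed

text \<open>One step of the Euclidean algorithm on the coefficients of an integer relation between the
  weights: a row operation on the basis lowers the sum of the absolute values of the coefficients,
  until a single row is left, which then has weight zero.\<close>

lemma adapted_basis_shrink:
  fixes lam :: "nat \<Rightarrow> nat \<Rightarrow> 'k::{idom, ring_char_0}"
  assumes "adapted_basis n T lam s A"
    and "\<forall>j\<in>T. (\<Sum>r\<in>A. of_int (c r) * weight T lam (s r) j) = 0" "r0 \<in> A" "c r0 \<noteq> 0"
  shows "\<exists>s' A'. adapted_basis n T lam s' A' \<and> card A' < card A"
  using assms
proof (induction "\<Sum>r\<in>A. nat \<bar>c r\<bar>" arbitrary: s c r0 rule: less_induct)
  case less
  have fin: "finite A"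
    using adapted_basis_subset[OF less.prems(1)] finite_subset by blast
  show ?case
  proof (cases "\<forall>r\<in>A. r \<noteq> r0 \<longrightarrow> c r = 0")
    case True
    have "(\<Sum>r\<in>A. of_int (c r) * weight T lam (s r) j) = of_int (c r0) * weight T lam (s r0) j" for j
      using True fin less.prems(3) by (subst sum.remove[of _ r0]) auto
    then have "\<forall>j\<in>T. weight T lam (s r0) j = 0"
      using less.prems(2,4) by simp
    then show ?thesis
      using adapted_basis_remove_row[OF less.prems(1)] card_Diff1_less[OF fin less.prems(3)] by blast
  next
    case False
    then obtain a b where ab: "a \<in> A" "b \<in> A" "a \<noteq> b" "c a \<noteq> 0" "c b \<noteq> 0" "\<bar>c b\<bar> \<le> \<bar>c a\<bar>"
      using less.prems(3,4) by (metis linorder_le_cases)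
    define q where "q = sgn (c a) * sgn (c b)"
    define s' where "s' = (\<lambda>i l. s i l + (if i = b then q else 0) * s a l)"
    define c' where "c' = c(a := c a - q * c b)"
    have "adapted_basis n T lam s' A"
      unfolding s'_def by (rule adapted_basis_add_row[OF less.prems(1) ab(1-3)])
    moreover have "\<forall>j\<in>T. (\<Sum>r\<in>A. of_int (c' r) * weight T lam (s' r) j) = 0"
      using less.prems(2) sum_coeffs_row_operation[OF fin ab(1-3), of c q "\<lambda>r. weight T lam (s r) _"]
      by (simp add: s'_def c'_def weight_add_row)
    moreover have "(\<Sum>r\<in>A. nat \<bar>c' r\<bar>) < (\<Sum>r\<in>A. nat \<bar>c r\<bar>)"
      unfolding c'_def q_def using fin ab(1) abs_sub_sgn_mult_less[OF ab(4,5,6)]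
      by (rule sum_nat_abs_update_less)
    moreover have "c' b \<noteq> 0"
      using ab by (simp add: c'_def)
    ultimately show ?thesis
      using less.hyps ab(2) by blast
  qed
qed

lemma adapted_basis_exists:
  fixes lam :: "nat \<Rightarrow> nat \<Rightarrow> 'k::{idom, ring_char_0}"
  assumes "T \<subseteq> {..<n}"
  shows "\<exists>s A. adapted_basis n T lam s A \<and> independent_weights T lam s A"
proof -
  have "\<exists>s' A'. adapted_basis n T lam s' A' \<and> independent_weights T lam s' A'"
    if "adapted_basis n T lam s A" for s A
    using that
  proof (induction "card A" arbitrary: s A rule: less_induct)
    case less
    show ?case
    proof (cases "independent_weights T lam s A")
      case False
      then obtain c r0 where "\<forall>j\<in>T. (\<Sum>r\<in>A. of_int (c r) * weight T lam (s r) j) = 0" "r0 \<in> A" "c r0 \<noteq> 0"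
        unfolding independent_weights_def by blast
      then show ?thesis
        using adapted_basis_shrink[OF less.prems] less.hyps by blast
    qed (use less.prems in blast)
  qed
  then show ?thesis
    using adapted_basis_identity[OF assms] by blast
qed

section \<open>The Poisson field Fract(A/P)\<close>

locale poisson_fract_quot =
  fixes n :: nat and lam :: "nat \<Rightarrow> nat \<Rightarrow> 'k::field_char_0" and P :: "'k mpoly set"
    and phi :: "'k mpoly \<Rightarrow> 'f::field" and br :: "'f \<Rightarrow> 'f \<Rightarrow> 'f"
  assumes antisym: "antisym_mat n lam"
    and fract_quot: "is_poisson_fract_quot n lam P phi br"
begin

sublocale poisson_field br
  using fract_quot by unfold_locales (simp add: is_poisson_fract_quot_def)

lemma phi_add: "a \<in> polys_in n \<Longrightarrow> b \<in> polys_in n \<Longrightarrow> phi (a + b) = phi a + phi b"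
  and phi_mult: "a \<in> polys_in n \<Longrightarrow> b \<in> polys_in n \<Longrightarrow> phi (a * b) = phi a * phi b"
  and phi_one [simp]: "phi 1 = 1"
  and phi_fraction: "\<exists>a\<in>polys_in n. \<exists>b\<in>polys_in n. z = phi a / phi b"
  and phi_bracket: "a \<in> polys_in n \<Longrightarrow> b \<in> polys_in n \<Longrightarrow> br (phi a) (phi b) = phi (qbracket n lam a b)"
  using fract_quot unfolding is_poisson_fract_quot_def by blast+

lemma lam_antisym: "a < n \<Longrightarrow> b < n \<Longrightarrow> lam a b = - lam b a"
  using antisym unfolding antisym_mat_def by blast

lemma phi_zero [simp]: "phi 0 = 0"
  using phi_add[of 0 0] by (metis add.right_neutral add_left_cancel polys_in_zero)

lemma phi_sum: "(\<And>i. i \<in> S \<Longrightarrow> f i \<in> polys_in n) \<Longrightarrow> phi (sum f S) = (\<Sum>i\<in>S. phi (f i))"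
  by (induction S rule: infinite_finite_induct) (simp_all add: phi_add polys_in_sum)

lemma phi_prod: "(\<And>i. i \<in> S \<Longrightarrow> f i \<in> polys_in n) \<Longrightarrow> phi (prod f S) = (\<Prod>i\<in>S. phi (f i))"
  by (induction S rule: infinite_finite_induct) (simp_all add: phi_mult polys_in_prod)

lemma phi_power: "a \<in> polys_in n \<Longrightarrow> phi (a ^ k) = phi a ^ k"
  by (induction k) (simp_all add: phi_mult polys_in_power)

definition scalar :: "'k \<Rightarrow> 'f" where
  "scalar c = phi (mconst c)"

definition gen :: "nat \<Rightarrow> 'f" where
  "gen i = phi (mvar i)"

lemma scalar_add: "scalar (a + b) = scalar a + scalar b"
  unfolding scalar_def mconst_add by (simp add: phi_add)

lemma scalar_mult: "scalar (a * b) = scalar a * scalar b"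
  unfolding scalar_def mconst_mult by (simp add: phi_mult)

lemma scalar_zero [simp]: "scalar 0 = 0"
  by (simp add: scalar_def mconst_def)

lemma scalar_one [simp]: "scalar 1 = 1"
  by (simp add: scalar_def)

lemma scalar_uminus: "scalar (- a) = - scalar a"
  using scalar_add[of a "- a"] by (simp add: eq_neg_iff_add_eq_0 add.commute)

lemma scalar_diff: "scalar (a - b) = scalar a - scalar b"
  using scalar_add[of a "- b"] scalar_uminus[of b] by simp

lemma scalar_sum: "scalar (sum f S) = (\<Sum>i\<in>S. scalar (f i))"
  by (induction S rule: infinite_finite_induct) (simp_all add: scalar_add)

lemma scalar_of_nat [simp]: "scalar (of_nat k) = of_nat k"
  by (induction k) (simp_all add: scalar_add)

lemma scalar_of_int [simp]: "scalar (of_int k) = of_int k"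
  by (cases k rule: int_cases) (simp_all add: scalar_uminus del: of_nat_Suc)

lemma scalar_eq_iff: "scalar a = scalar b \<longleftrightarrow> a = b"
proof
  assume "scalar a = scalar b"
  then have "scalar ((a - b) * inverse (a - b)) = 0"
    by (simp add: scalar_mult scalar_diff)
  then show "a = b"
    by (cases "a = b") simp_all
qed simp

lemma phi_eq_sum_monomials:
  assumes "a \<in> polys_in n"
  shows "phi a = (\<Sum>mo\<in>Poly_Mapping.keys a.
      scalar (Poly_Mapping.lookup a mo) * (\<Prod>i\<in>Poly_Mapping.keys mo. gen i ^ Poly_Mapping.lookup mo i))"
proof -
  have vars: "i < n" if "mo \<in> Poly_Mapping.keys a" "i \<in> Poly_Mapping.keys mo" for mo i
    using assms that unfolding polys_in_def by blast
  have "phi a = phi (\<Sum>mo\<in>Poly_Mapping.keys a. Poly_Mapping.single mo (Poly_Mapping.lookup a mo))"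
    by (subst poly_mapping_eq_sum_single[of a]) (rule refl)
  also have "\<dots> = (\<Sum>mo\<in>Poly_Mapping.keys a. phi (mconst (Poly_Mapping.lookup a mo)
      * (\<Prod>i\<in>Poly_Mapping.keys mo. mvar i ^ Poly_Mapping.lookup mo i)))"
    using vars by (subst phi_sum) (auto intro: polys_in_single simp flip: single_eq_mconst_times_mvars)
  also have "\<dots> = (\<Sum>mo\<in>Poly_Mapping.keys a.
      scalar (Poly_Mapping.lookup a mo) * (\<Prod>i\<in>Poly_Mapping.keys mo. gen i ^ Poly_Mapping.lookup mo i))"
    using vars unfolding scalar_def gen_def
    by (intro sum.cong refl)
      (simp add: phi_mult phi_prod phi_power polys_in_prod polys_in_power polys_in_mvar)
  finally show ?thesis .
qed

lemma subfield_containing_generators_eq_UNIV: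
  assumes S: "subfield S" and scalars: "\<And>c. scalar c \<in> S" and gens: "\<And>i. i < n \<Longrightarrow> gen i \<in> S"
  shows "S = UNIV"
proof -
  have "phi a \<in> S" if a: "a \<in> polys_in n" for a
  proof -
    have "(\<Prod>i\<in>Poly_Mapping.keys mo. gen i ^ Poly_Mapping.lookup mo i) \<in> S"
      if "mo \<in> Poly_Mapping.keys a" for mo
      by (rule subfield_prod[OF S])
        (use a that in \<open>auto simp: polys_in_def intro!: subfield_power[OF S] gens\<close>)
    then show ?thesis
      unfolding phi_eq_sum_monomials[OF a]
      by (auto intro!: subfield_sum[OF S] subfield_mult[OF S] scalars)
  qed
  moreover have "z \<in> S" if "\<And>a. a \<in> polys_in n \<Longrightarrow> phi a \<in> S" for z
    using phi_fraction[of z] that subfield_divide[OF S] by blast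
  ultimately show ?thesis
    by blast
qed

lemma scalar_in_center: "scalar c \<in> center"
proof -
  have "{z. br (scalar c) z = 0} = UNIV"
    by (rule subfield_containing_generators_eq_UNIV[OF subfield_centralizer])
      (simp_all add: scalar_def gen_def phi_bracket qbracket_mconst polys_in_mvar)
  then show ?thesis
    unfolding center_def by blast
qed

lemma bracket_gen: "i < n \<Longrightarrow> j < n \<Longrightarrow> br (gen i) (gen j) = scalar (lam i j) * gen i * gen j"
  unfolding gen_def scalar_def
  by (simp add: phi_bracket qbracket_mvar polys_in_mvar phi_mult polys_in_mult)

end

context poisson_fract_quot
begin

definition nz_gens :: "nat set" where
  "nz_gens = {i. i < n \<and> gen i \<noteq> 0}"

lemma nz_gens_subset: "nz_gens \<subseteq> {..<n}"
  by (auto simp: nz_gens_def)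

lemma finite_nz_gens [simp]: "finite nz_gens"
  using nz_gens_subset finite_subset by blast

definition gen_monom :: "(nat \<Rightarrow> int) \<Rightarrow> 'f" where
  "gen_monom v = (\<Prod>i\<in>nz_gens. gen i powi v i)"

lemma gen_monom_nonzero: "gen_monom v \<noteq> 0"
  unfolding gen_monom_def by (auto simp: nz_gens_def)

lemma log_bracket_gen_monom:
  "log_bracket (gen_monom v) z = (\<Sum>i\<in>nz_gens. of_int (v i) * log_bracket (gen i) z)"
  unfolding gen_monom_def by (subst log_bracket_prod) (auto simp: nz_gens_def log_bracket_power_int)

lemma log_bracket_gen_monom_gen:
  assumes "j < n"
  shows "log_bracket (gen_monom v) (gen j) = scalar (weight nz_gens lam v j) * gen j"
proof -
  have "log_bracket (gen_monom v) (gen j) = (\<Sum>i\<in>nz_gens. of_int (v i) * (scalar (lam i j) * gen j))"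
    unfolding log_bracket_gen_monom
    using assms by (intro sum.cong refl) (simp add: log_bracket_def nz_gens_def bracket_gen)
  then show ?thesis
    by (simp add: weight_def scalar_sum scalar_mult sum_distrib_right mult.assoc)
qed

lemma bracket_gen_monom_gen:
  "j < n \<Longrightarrow> br (gen_monom v) (gen j) = scalar (weight nz_gens lam v j) * gen_monom v * gen j"
  by (simp add: bracket_eq_log_bracket log_bracket_gen_monom_gen mult_ac)

lemma bracket_gen_monom_gen_monom:
  "br (gen_monom v) (gen_monom w)
    = scalar (\<Sum>a\<in>nz_gens. \<Sum>b\<in>nz_gens. of_int (v a) * lam a b * of_int (w b)) * gen_monom v * gen_monom w"
proof -
  have "log_bracket (gen a) (gen_monom w) = scalar (\<Sum>b\<in>nz_gens. lam a b * of_int (w b)) * gen_monom w"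
    if a: "a \<in> nz_gens" for a
  proof -
    have "weight nz_gens lam w a = - (\<Sum>b\<in>nz_gens. lam a b * of_int (w b))"
      using a unfolding weight_def
      by (auto simp: sum_negf[symmetric] lam_antisym[of a] nz_gens_def intro!: sum.cong)
    then show ?thesis
      using a unfolding log_bracket_def
      by (subst bracket_antisym) (simp add: bracket_gen_monom_gen nz_gens_def scalar_uminus)
  qed
  then have "br (gen_monom v) (gen_monom w)
      = gen_monom v * (\<Sum>a\<in>nz_gens. of_int (v a) * (scalar (\<Sum>b\<in>nz_gens. lam a b * of_int (w b)) * gen_monom w))"
    unfolding bracket_eq_log_bracket[of "gen_monom v"] log_bracket_gen_monom
    by (intro arg_cong[where f = "(*) _"] sum.cong) simp_all
  then show ?thesis
    by (simp add: scalar_sum scalar_mult sum_distrib_left sum_distrib_right mult_ac)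
qed

lemma gen_monom_in_center:
  assumes "\<forall>j\<in>nz_gens. weight nz_gens lam v j = 0"
  shows "gen_monom v \<in> center"
proof -
  have "{z. br (gen_monom v) z = 0} = UNIV"
  proof (rule subfield_containing_generators_eq_UNIV[OF subfield_centralizer])
    show "scalar c \<in> {z. br (gen_monom v) z = 0}" for c
      using scalar_in_center bracket_antisym[of "gen_monom v"] by (simp add: center_def)
    show "gen i \<in> {z. br (gen_monom v) z = 0}" if "i < n" for i
      using assms that by (cases "i \<in> nz_gens") (auto simp: bracket_gen_monom_gen nz_gens_def)
  qed
  then show ?thesis
    unfolding center_def by blast
qed

text \<open>The exponents t are the i-th row of the inverse of s.\<close>

lemma gen_eq_prod_gen_monom:
  assumes s: "GL_int n s" and i: "i \<in> nz_gens"
  shows "\<exists>t. gen i = (\<Prod>r<n. gen_monom (s r) powi t r)"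
proof -
  obtain t where t: "\<And>i j. i < n \<Longrightarrow> j < n \<Longrightarrow> (\<Sum>l<n. t i l * s l j) = (if i = j then 1 else 0)"
    using s unfolding GL_int_def by blast
  have "gen i = (\<Prod>j\<in>nz_gens. if j = i then gen j else 1)"
    using i by (simp add: prod.delta)
  also have "\<dots> = (\<Prod>j\<in>nz_gens. gen j powi (\<Sum>l<n. t i l * s l j))"
    using i by (intro prod.cong refl) (auto simp: t nz_gens_def)
  also have "\<dots> = (\<Prod>j\<in>nz_gens. \<Prod>l<n. gen j powi (s l j * t i l))"
    by (intro prod.cong refl) (simp add: prod_power_int_eq_power_int_sum nz_gens_def mult.commute)
  also have "\<dots> = (\<Prod>l<n. gen_monom (s l) powi t i l)"
    unfolding gen_monom_def by (subst prod.swap) (simp add: power_int_mult prod_power_int_distrib)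
  finally show ?thesis
    by blast
qed

end

section \<open>Coordinates\<close>

locale poisson_coordinates = poisson_fract_quot +
  fixes s :: "nat \<Rightarrow> nat \<Rightarrow> int" and A :: "nat set" and p :: "nat \<Rightarrow> nat"
  assumes adapted: "adapted_basis n nz_gens lam s A"
    and independent: "independent_weights nz_gens lam s A"
    and perm: "bij_betw p {..<n} {..<n}"
    and perm_prefix: "p ` {..<card A} = A"
begin

definition coord_row :: "nat \<Rightarrow> nat \<Rightarrow> int" where
  "coord_row k = s (p k)"

definition coord where
  "coord k = gen_monom (coord_row k)"

lemma card_le: "card A \<le> n"
  using card_mono[OF _ adapted_basis_subset[OF adapted]] by simp

lemma perm_mem: "k < card A \<Longrightarrow> p k \<in> A"
  using perm_prefix by blast

lemma inj_on_perm: "inj_on p {..<card A}"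
  using perm card_le unfolding bij_betw_def by (auto intro: inj_on_subset)

lemma GL_int_coord_row: "GL_int n coord_row"
  using adapted GL_int_permute_rows[OF _ perm] unfolding adapted_basis_def coord_row_def by blast

lemma coord_row_support: "k < card A \<Longrightarrow> i < n \<Longrightarrow> coord_row k i \<noteq> 0 \<Longrightarrow> i \<in> nz_gens"
  using adapted perm_mem unfolding adapted_basis_def coord_row_def by blast

lemma sum_reindex_perm: "(\<Sum>r\<in>A. g r) = (\<Sum>k<card A. g (p k))"
  using sum.reindex[OF inj_on_perm, of g] perm_prefix by simp

lemma coord_row_weights_independent:
  assumes "\<forall>j\<in>nz_gens. (\<Sum>k<card A. of_int (c k) * weight nz_gens lam (coord_row k) j) = 0" "k < card A"
  shows "c k = 0"
proof -
  define c' where "c' r = c (inv_into {..<card A} p r)" for r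
  have c'_perm: "k < card A \<Longrightarrow> c' (p k) = c k" for k
    unfolding c'_def using inj_on_perm by simp
  have "(\<Sum>r\<in>A. of_int (c' r) * weight nz_gens lam (s r) j)
      = (\<Sum>k<card A. of_int (c k) * weight nz_gens lam (coord_row k) j)" for j
    unfolding sum_reindex_perm by (intro sum.cong) (auto simp: c'_perm coord_row_def)
  then have "\<forall>r\<in>A. c' r = 0"
    using independent assms(1) unfolding independent_weights_def by simp
  then show "c k = 0"
    using perm_mem[OF assms(2)] c'_perm[OF assms(2)] by simp
qed

lemma bracket_coord:
  assumes "k < card A" "k' < card A"
  shows "br (coord k) (coord k') = scalar (conj_mat n coord_row lam k k') * coord k * coord k'"
proof -
  let ?f = "\<lambda>a b. of_int (coord_row k a) * lam a b * of_int (coord_row k' b)"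
  have "(\<Sum>b\<in>nz_gens. ?f a b) = (\<Sum>b<n. ?f a b)" for a
    using coord_row_support[OF assms(2)] nz_gens_subset by (intro sum.mono_neutral_left) auto
  moreover have "coord_row k a = 0" if "a < n" "a \<notin> nz_gens" for a
    using coord_row_support[OF assms(1)] that by blast
  then have "(\<Sum>a\<in>nz_gens. \<Sum>b<n. ?f a b) = (\<Sum>a<n. \<Sum>b<n. ?f a b)"
    using nz_gens_subset by (intro sum.mono_neutral_left) auto
  ultimately have "(\<Sum>a\<in>nz_gens. \<Sum>b\<in>nz_gens. ?f a b) = conj_mat n coord_row lam k k'"
    by (simp add: conj_mat_def)
  then show ?thesis
    by (simp add: coord_def bracket_gen_monom_gen_monom)
qed

definition monom_weight where
  "monom_weight j mo
    = (\<Sum>k\<in>Poly_Mapping.keys mo. of_nat (Poly_Mapping.lookup mo k) * weight nz_gens lam (coord_row k) j)"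

lemma monom_val_coord_nonzero: "monom_val coord mo \<noteq> 0"
  by (simp add: monom_val_def coord_def gen_monom_nonzero)

lemma bracket_monom_val_gen:
  assumes "j < n"
  shows "br (monom_val coord mo) (gen j) = scalar (monom_weight j mo) * monom_val coord mo * gen j"
proof -
  have "log_bracket (monom_val coord mo) (gen j)
      = (\<Sum>k\<in>Poly_Mapping.keys mo. log_bracket (coord k ^ Poly_Mapping.lookup mo k) (gen j))"
    unfolding monom_val_def by (rule log_bracket_prod) (simp add: coord_def gen_monom_nonzero)
  also have "\<dots> = (\<Sum>k\<in>Poly_Mapping.keys mo.
      of_nat (Poly_Mapping.lookup mo k) * (scalar (weight nz_gens lam (coord_row k) j) * gen j))"
    using assms
    by (intro sum.cong refl)
      (simp add: coord_def gen_monom_nonzero log_bracket_power log_bracket_gen_monom_gen)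
  also have "\<dots> = scalar (monom_weight j mo) * gen j"
    by (simp add: monom_weight_def scalar_sum scalar_mult sum_distrib_right mult.assoc)
  finally show ?thesis
    by (simp add: bracket_eq_log_bracket mult_ac)
qed

lemma monom_weight_separates:
  assumes "Poly_Mapping.keys mo \<subseteq> {..<card A}" "Poly_Mapping.keys mo' \<subseteq> {..<card A}" "mo \<noteq> mo'"
  shows "\<exists>j\<in>nz_gens. monom_weight j mo \<noteq> monom_weight j mo'"
proof (rule ccontr)
  assume "\<not> ?thesis"
  then have same: "\<forall>j\<in>nz_gens. monom_weight j mo = monom_weight j mo'"
    by blast
  define c where "c k = int (Poly_Mapping.lookup mo k) - int (Poly_Mapping.lookup mo' k)" for k
  have expand: "monom_weight j mo
      = (\<Sum>k<card A. of_nat (Poly_Mapping.lookup mo k) * weight nz_gens lam (coord_row k) j)"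
    if "Poly_Mapping.keys mo \<subseteq> {..<card A}" for j mo
    unfolding monom_weight_def using that by (intro sum.mono_neutral_left) (auto simp: in_keys_iff)
  have "\<forall>j\<in>nz_gens. (\<Sum>k<card A. of_int (c k) * weight nz_gens lam (coord_row k) j) = 0"
    using same expand[OF assms(1)] expand[OF assms(2)]
    by (simp add: c_def sum_subtractf algebra_simps)
  then have "Poly_Mapping.lookup mo k = Poly_Mapping.lookup mo' k" for k
  proof (cases "k < card A")
    case False
    then have "k \<notin> Poly_Mapping.keys mo" "k \<notin> Poly_Mapping.keys mo'"
      using assms(1,2) by auto
    then show ?thesis
      by (simp add: in_keys_iff)
  qed (use coord_row_weights_independent[of c k] in \<open>simp add: c_def\<close>)
  then show False
    using assms(3) poly_mapping_eqI by blast
qed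

lemma coords_algebraically_independent:
  assumes "q \<in> polys_over center (card A)" "meval coord q = 0"
  shows "q = 0"
proof (rule ccontr)
  assume "q \<noteq> 0"
  have "(\<Sum>mo\<in>Poly_Mapping.keys q. Poly_Mapping.lookup q mo * monom_val coord mo) \<noteq> 0"
  proof (rule sum_center_eigenvectors_nonzero[where t = gen and J = nz_gens
        and w = "\<lambda>j mo. scalar (monom_weight j mo)"])
    show "\<forall>mo\<in>Poly_Mapping.keys q. \<forall>mo'\<in>Poly_Mapping.keys q. mo \<noteq> mo'
        \<longrightarrow> (\<exists>j\<in>nz_gens. scalar (monom_weight j mo) \<noteq> scalar (monom_weight j mo'))"
      using assms(1) monom_weight_separates by (auto simp: scalar_eq_iff polys_over_def polys_in_def)
  qed (use assms(1) \<open>q \<noteq> 0\<close> in \<open>auto simp: polys_over_def in_keys_iff nz_gens_def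
          monom_val_coord_nonzero bracket_monom_val_gen scalar_in_center\<close>)
  then show False
    using assms(2) by (simp add: meval_eq_sum_monom_val)
qed

lemma gen_monom_row_mem_rational_values:
  assumes "r < n"
  shows "gen_monom (s r) \<in> rational_values center (card A) coord"
proof (cases "r \<in> A")
  case True
  then obtain k where "k < card A" "r = p k"
    using perm_prefix by blast
  then show ?thesis
    using rational_values_var[OF subfield_center, of k "card A" coord]
    by (simp add: coord_def coord_row_def)
next
  case False
  then have "gen_monom (s r) \<in> center"
    using adapted assms unfolding adapted_basis_def by (intro gen_monom_in_center) blast
  then show ?thesis
    by (rule rational_values_const[OF subfield_center])
qed

lemma rational_values_eq_UNIV: "rational_values center (card A) coord = UNIV"
proof (rule subfield_containing_generators_eq_UNIV[OF subfield_rational_values[OF subfield_center]])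
  show "scalar c \<in> rational_values center (card A) coord" for c
    using scalar_in_center by (rule rational_values_const[OF subfield_center])
  show "gen i \<in> rational_values center (card A) coord" if "i < n" for i
  proof (cases "i \<in> nz_gens")
    case True
    then obtain t where "gen i = (\<Prod>r<n. gen_monom (s r) powi t r)"
      using gen_eq_prod_gen_monom adapted unfolding adapted_basis_def by blast
    then show ?thesis
      using subfield_rational_values[OF subfield_center]
      by (auto intro!: subfield_prod subfield_power_int gen_monom_row_mem_rational_values)
  next
    case False
    then show ?thesis
      using that subfield_rational_values[OF subfield_center] by (simp add: nz_gens_def subfield_zero)
  qed
qed

lemma is_quantum_rat_field_coord: "is_quantum_rat_field scalar br (card A) (conj_mat n coord_row lam)"
  unfolding is_quantum_rat_field_def
proof (intro exI[of _ center] exI[of _ coord] conjI)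
  show "\<forall>z. \<exists>a\<in>polys_over center (card A). \<exists>b\<in>polys_over center (card A).
      meval coord b \<noteq> 0 \<and> z = meval coord a / meval coord b"
    using rational_values_eq_UNIV unfolding rational_values_def by blast
qed (use subfield_center scalar_in_center coords_algebraically_independent bracket_coord
     in \<open>auto simp: center_def\<close>)

end

theorem theorem3p4:
  fixes n :: nat
    and lam :: "nat \<Rightarrow> nat \<Rightarrow> 'k::field_char_0"
    and P :: "'k mpoly set"
    and phi :: "'k mpoly \<Rightarrow> 'f::field"
    and br :: "'f \<Rightarrow> 'f \<Rightarrow> 'f"
  assumes "antisym_mat n lam"
    and "poisson_prime n lam P"
    and "is_poisson_fract_quot n lam P phi br"
  shows "\<exists>m s. m \<le> n \<and> GL_int n s \<and> antisym_mat m (conj_mat n s lam)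
           \<and> is_quantum_rat_field (\<lambda>c. phi (mconst c)) br m (conj_mat n s lam)"
proof -
  \<comment> \<open>The Poisson primality of P is implicit in is_poisson_fract_quot and not used again.\<close>
  interpret poisson_fract_quot n lam P phi br
    using assms(1,3) by (rule poisson_fract_quot.intro)
  obtain s A where adapted: "adapted_basis n nz_gens lam s A" "independent_weights nz_gens lam s A"
    using adapted_basis_exists[OF nz_gens_subset] by blast
  then obtain p where "bij_betw p {..<n} {..<n}" "p ` {..<card A} = A"
    using exists_permutation_onto_prefix[OF adapted_basis_subset[OF adapted(1)]] by blast
  with adapted interpret poisson_coordinates n lam P phi br s A p
    by unfold_locales
  have "(\<lambda>c. phi (mconst c)) = scalar"
    by (simp add: fun_eq_iff scalar_def)
  then show ?thesis
    using card_le GL_int_coord_row antisym_mat_conj_mat[OF assms(1)] is_quantum_rat_field_coord by auto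
qed

end
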